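(* Let $r_1 \ge 2$ and $x_1 \ge 1$ be integers and $d = x_1 + r_1 - 1$. Let $R = K[z_1,\ldots,z_{r_1+3},y_1,\ldots,y_d]$ over a field $K$ with the lexicographic order $<_{lex}$ given by $z_1 > \cdots > z_{r_1+3} > y_1 > \cdots > y_d$. Let $B$ be the set of pairs $(i,j)\in\mathbb{N}^2$ with $j-i\ge 2$, $1\le i\le r_1$, $j \le r_1+3$, $j\ne r_1+1$, and let $J$ be the monomial ideal of $R$ generated by the monomials $z_iz_j$ for $(i,j)\in B$, $z_{k+1}\prod_{s=1}^{r_1-1}y_s$ for $0\le k\le r_1-1$, $z_{r_1-k}\prod_{s=r_1}^{d}y_s$ for $0\le k\le r_1-1$, $z_{r_1+2}\prod_{s=1}^{r_1-1}y_s$, and $z_{r_1+1}\prod_{s=r_1}^{d}y_s$. Suppose $f = z_1^{\gamma_1}\cdots z_{r_1+3}^{\gamma_{r_1+3}} y_1^{\delta_1}\cdots y_d^{\delta_d}$ is a monomial with $f \notin J$ and $\gamma_i > 0$ for at least one $i$. Let $m$ be the minimal index with $\gamma_m > 0$. Then $|\{i : \gamma_i > 0\}| \le 3$, and moreover: (1) if $1 \le m \le r_1-1$, then $\gamma_i = 0$ for all $i \in \{1,\ldots,r_1+3\}\setminus\{m, m+1, r_1+1\}$; (2) if $m = r_1$, then $\gamma_i = 0$ for all $i \in \{1,\ldots,r_1-1\}\cup\{r_1+3\}$; (3) if $m \in \{r_1+1, r_1+2, r_1+3\}$, then $\gamma_i = 0$ for all $i < m$.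
   Context: The ideal $J$ is the initial ideal, with respect to $<_{lex}$, generated by the leading terms of a specific set of binomials in the toric ideal of the lattice points of the simplex $\mathrm{conv}\{\mathbf{e}_1,\ldots,\mathbf{e}_d,-\mathbf{q}\}$, $\mathbf{q}=(r_1^{x_1},(1+r_1x_1)^{r_1-1})$; only the monomials listed are needed for the statement. *)

theory Defs
  imports Main
begin

text \<open>A monomial of R = K[z_1..z_{r1+3}, y_1..y_d] is represented by its pair of
exponent functions (gamma, delta): gamma i is the exponent of z_i, delta s that of y_s.\<close>

type_synonym monom = "(nat \<Rightarrow> nat) \<times> (nat \<Rightarrow> nat)"

definition is_monom :: "nat \<Rightarrow> nat \<Rightarrow> monom \<Rightarrow> bool" where
  "is_monom r1 x1 f \<longleftrightarrow> (\<forall>i. fst f i > 0 \<longrightarrow> 1 \<le> i \<and> i \<le> r1 + 3)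
                        \<and> (\<forall>s. snd f s > 0 \<longrightarrow> 1 \<le> s \<and> s \<le> x1 + r1 - 1)"

definition zvar :: "nat set \<Rightarrow> monom" where
  "zvar A = ((\<lambda>i. if i \<in> A then 1 else 0), (\<lambda>_. 0))"

definition ysq :: "nat \<Rightarrow> nat \<Rightarrow> nat \<Rightarrow> monom" where
  "ysq k a b = ((\<lambda>i. if i = k then 1 else 0), (\<lambda>s. if a \<le> s \<and> s \<le> b then 1 else 0))"

definition Bset :: "nat \<Rightarrow> (nat \<times> nat) set" where
  "Bset r1 = {(i, j). 2 \<le> j - i \<and> i < j \<and> 1 \<le> i \<and> i \<le> r1 \<and> j \<le> r1 + 3 \<and> j \<noteq> r1 + 1}"

definition Jgens :: "nat \<Rightarrow> nat \<Rightarrow> monom set" where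
  "Jgens r1 x1 =
     {zvar {i, j} | i j. (i, j) \<in> Bset r1}
   \<union> {ysq (k + 1) 1 (r1 - 1) | k. k \<le> r1 - 1}
   \<union> {ysq (r1 - k) r1 (x1 + r1 - 1) | k. k \<le> r1 - 1}
   \<union> {ysq (r1 + 2) 1 (r1 - 1), ysq (r1 + 1) r1 (x1 + r1 - 1)}"

definition mdvd :: "monom \<Rightarrow> monom \<Rightarrow> bool" where
  "mdvd g f \<longleftrightarrow> (\<forall>i. fst g i \<le> fst f i) \<and> (\<forall>s. snd g s \<le> snd f s)"

text \<open>A monomial lies in the monomial ideal J iff it is divisible by one of its generators;
 we define membership of monomials in J in this standard way.\<close>
definition in_J :: "nat \<Rightarrow> nat \<Rightarrow> monom \<Rightarrow> bool" where
  "in_J r1 x1 f \<longleftrightarrow> (\<exists>g \<in> Jgens r1 x1. mdvd g f)"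

end

theory Submission
  imports Defs
begin

text \<open>Only the quadratic generators z_i z_j with (i, j) \<in> B matter: if z_m is the smallest
  variable dividing f, then no z_j with (m, j) \<in> B divides f, which confines the support of
  gamma to at most three indices just above m (to {r1, r1 + 1} when m = r1, since
  (r1, r1 + 2) \<in> B).\<close>

lemma mdvd_zvar_iff: "mdvd (zvar A) (gamma, delta) \<longleftrightarrow> (\<forall>i \<in> A. 0 < gamma i)"
  unfolding mdvd_def zvar_def by (auto simp: Suc_le_eq)

lemma Bset_exponent_eq_0:
  assumes "\<not> in_J r1 x1 (gamma, delta)" "(i, j) \<in> Bset r1" "0 < gamma i"
  shows "gamma j = 0"
proof (rule ccontr)
  assume "gamma j \<noteq> 0"
  then have "mdvd (zvar {i, j}) (gamma, delta)"
    using assms(3) by (simp add: mdvd_zvar_iff)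
  moreover have "zvar {i, j} \<in> Jgens r1 x1"
    using assms(2) unfolding Jgens_def by blast
  ultimately show False
    using assms(1) unfolding in_J_def by blast
qed

definition window :: "nat \<Rightarrow> nat \<Rightarrow> nat set" where
  "window r1 m =
     (if m < r1 then {m, m + 1, r1 + 1}
      else if m = r1 then {r1, r1 + 1}
      else {r1 + 1, r1 + 2, r1 + 3})"

lemma finite_window: "finite (window r1 m)"
  by (simp add: window_def)

lemma card_window_le: "card (window r1 m) \<le> 3"
  using card_length[of "[m, m + 1, r1 + 1]"] card_length[of "[r1, r1 + 1]"]
    card_length[of "[r1 + 1, r1 + 2, r1 + 3]"]
  by (auto simp: window_def)

lemma support_subset_window:
  assumes "\<not> in_J r1 x1 (gamma, delta)" "is_monom r1 x1 (gamma, delta)"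
    and "0 < gamma m" "\<forall>i < m. gamma i = 0"
  shows "{i. 0 < gamma i} \<subseteq> window r1 m"
proof
  fix i assume "i \<in> {i. 0 < gamma i}"
  then have "0 < gamma i" by simp
  then have "m \<le> i"
    using assms(4) by (metis leI less_not_refl)
  moreover have "i \<le> r1 + 3" "1 \<le> m"
    using assms(2,3) \<open>0 < gamma i\<close> unfolding is_monom_def by auto
  moreover have "(m, i) \<notin> Bset r1"
    using Bset_exponent_eq_0[OF assms(1) _ assms(3)] \<open>0 < gamma i\<close> by auto
  ultimately show "i \<in> window r1 m"
    unfolding Bset_def window_def by auto
qed

theorem lemma3p4:
  fixes r1 x1 :: nat and gamma delta :: "nat \<Rightarrow> nat"
  assumes "r1 \<ge> 2" and "x1 \<ge> 1"
    and "is_monom r1 x1 (gamma, delta)"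
    and "\<not> in_J r1 x1 (gamma, delta)"
    and "\<exists>i. gamma i > 0"
  defines "m \<equiv> (LEAST i. gamma i > 0)"
  shows "card {i. gamma i > 0} \<le> 3
         \<and> (1 \<le> m \<and> m \<le> r1 - 1 \<longrightarrow>
              (\<forall>i \<in> {1..r1 + 3} - {m, m + 1, r1 + 1}. gamma i = 0))
         \<and> (m = r1 \<longrightarrow> (\<forall>i \<in> {1..r1 - 1} \<union> {r1 + 3}. gamma i = 0))
         \<and> (m \<in> {r1 + 1, r1 + 2, r1 + 3} \<longrightarrow> (\<forall>i < m. gamma i = 0))"
proof -
  have "0 < gamma m"
    unfolding m_def using assms(5) by (rule LeastI_ex)
  moreover have below_m: "\<forall>i < m. gamma i = 0"
    unfolding m_def using not_less_Least by blast
  ultimately have window: "{i. 0 < gamma i} \<subseteq> window r1 m"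
    using support_subset_window assms(3,4) by blast
  have card: "card {i. 0 < gamma i} \<le> 3"
    using card_mono[OF finite_window window] card_window_le by (rule le_trans)
  have low: "window r1 m = {m, m + 1, r1 + 1}" if "m \<le> r1 - 1"
  proof -
    have "m < r1"
      using that assms(1) by linarith
    then show ?thesis
      by (simp add: window_def)
  qed
  have mid: "window r1 m = {r1, r1 + 1}" if "m = r1"
    using that by (simp add: window_def)
  have outside: "gamma i = 0" if "i \<notin> window r1 m" for i
    using that window by (metis mem_Collect_eq neq0_conv subsetD)
  show ?thesis
  proof (intro conjI impI ballI)
    fix i assume "1 \<le> m \<and> m \<le> r1 - 1" "i \<in> {1..r1 + 3} - {m, m + 1, r1 + 1}"
    then show "gamma i = 0"
      using low outside by blast
  next
    fix i assume "m = r1" "i \<in> {1..r1 - 1} \<union> {r1 + 3}"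
    then have "i \<notin> window r1 m"
      using mid by auto
    then show "gamma i = 0"
      by (rule outside)
  qed (use card below_m in auto)
qed

end
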